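(* Let $d$ be an odd prime and $n\ge 2$. Let $\bar X_1,\bar Z_1,\dots,\bar X_n,\bar Z_n\in\mathcal{P}_d^n$ be such that the association $X_i\mapsto\bar X_i$, $Z_i\mapsto\bar Z_i$ ($i=1,\dots,n$) is commutation relation preserving, and suppose $\bar X_1=X\otimes P'$ and $\bar Z_1=Z\otimes Q'$ for some $P',Q'\in\mathcal{P}_d^{n-1}$. Then there exists a circuit $U$ built from the gates $C_X$, $F$, $S$ such that $UX_1U^{-1}=\lambda\, X\otimes P'$ and $UZ_1U^{-1}=\mu\, Z\otimes Q'$ for some complex scalars $\lambda,\mu$.
   Context: $\omega=e^{2\pi i/d}$; $X|j\rangle=|j+1\bmod d\rangle$, $Z|j\rangle=\omega^j|j\rangle$, $F|j\rangle=\frac1{\sqrt d}\sum_m\omega^{jm}|m\rangle$, $S|j\rangle=\omega^{j(j+1)/2}|j\rangle$, $C_X|j\rangle|k\rangle=|j\rangle|j+k\bmod d\rangle$. $X_i,Z_i$ denote $X,Z$ acting on qudit $i$ (identity elsewhere). $\mathcal{P}_d^n$ is the group of operators $\omega^kZ_1^{a_1}X_1^{b_1}\cdots Z_n^{a_n}X_n^{b_n}$. For $P=\omega^kZ_1^{a_1}X_1^{b_1}\cdots Z_n^{a_n}X_n^{b_n}$, $Q=\omega^lZ_1^{c_1}X_1^{e_1}\cdots Z_n^{c_n}X_n^{e_n}$ define $(P,Q)=\sum_i(a_ie_i-b_ic_i)\in\mathbb{Z}_d$ (so $PQ=\omega^{(P,Q)}QP$). An association $P_i\mapsto\bar P_i$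 between equal-size indexed families in $\mathcal{P}_d^n$ is commutation relation preserving if $(P_i,P_j)=(\bar P_i,\bar P_j)$ for all $i,j$. A circuit built from a gate set is a finite product of gates from the set, one-qudit gates on any qudit, two-qudit gates on any ordered pair of distinct qudits. *)

theory Defs
  imports Complex_Main "HOL-Computational_Algebra.Primes"
begin

text \<open>Operators on n qudits of dimension d, represented as matrices indexed by
  computational basis states. A basis state is a function j from qudit indices
  to {0..d-1}; qudits are numbered 0..n-1 (qudit 1 of the paper is index 0).
  All matrices are zero outside the basis, so plain equality is operator equality.\<close>

type_synonym op = "(nat \<Rightarrow> nat) \<Rightarrow> (nat \<Rightarrow> nat) \<Rightarrow> complex"

definition basis :: "nat \<Rightarrow> nat \<Rightarrow> (nat \<Rightarrow> nat) set" where
  "basis d n = {f. \<forall>i. (i < n \<longrightarrow> f i < d) \<and> (n \<le> i \<longrightarrow> f i = 0)}"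

definition restr :: "nat \<Rightarrow> nat \<Rightarrow> op \<Rightarrow> op" where
  "restr d n M = (\<lambda>x y. if x \<in> basis d n \<and> y \<in> basis d n then M x y else 0)"

definition mmult :: "nat \<Rightarrow> nat \<Rightarrow> op \<Rightarrow> op \<Rightarrow> op" where
  "mmult d n A B = restr d n (\<lambda>x y. \<Sum>z\<in>basis d n. A x z * B z y)"

definition ident :: "nat \<Rightarrow> nat \<Rightarrow> op" where
  "ident d n = restr d n (\<lambda>x y. if x = y then 1 else 0)"

definition scal :: "complex \<Rightarrow> op \<Rightarrow> op" where
  "scal c M = (\<lambda>x y. c * M x y)"

definition wpow :: "nat \<Rightarrow> int \<Rightarrow> complex" where
  "wpow d m = cis (2 * pi * of_int m / of_nat d)"

text \<open>The Pauli operator omega^k Z_1^{a_1} X_1^{b_1} ... Z_n^{a_n} X_n^{b_n};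
  since Z^a X^b |y> = omega^{a(y+b)} |y+b>, its matrix entry <x|.|y> is
  omega^k * prod_i [x_i = y_i + b_i mod d] omega^{a_i x_i}.\<close>
definition pauli :: "nat \<Rightarrow> nat \<Rightarrow> int \<Rightarrow> (nat \<Rightarrow> int) \<Rightarrow> (nat \<Rightarrow> int) \<Rightarrow> op" where
  "pauli d n k a b = restr d n (\<lambda>x y. wpow d k *
     (\<Prod>i<n. if int (x i) = (int (y i) + b i) mod int d then wpow d (a i * int (x i)) else 0))"

definition sform :: "nat \<Rightarrow> nat \<Rightarrow> (nat \<Rightarrow> int) \<Rightarrow> (nat \<Rightarrow> int) \<Rightarrow> (nat \<Rightarrow> int) \<Rightarrow> (nat \<Rightarrow> int) \<Rightarrow> int" where
  "sform d n a b c e = (\<Sum>i<n. a i * e i - b i * c i) mod int d"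

definition unitv :: "nat \<Rightarrow> nat \<Rightarrow> int" where
  "unitv i = (\<lambda>j. if j = i then 1 else 0)"

text \<open>Single-qudit gates as d x d matrices (entry G m j = <m|G|j>).\<close>
definition Fmat :: "nat \<Rightarrow> nat \<Rightarrow> nat \<Rightarrow> complex" where
  "Fmat d m j = wpow d (int j * int m) / complex_of_real (sqrt (real d))"

definition Smat :: "nat \<Rightarrow> nat \<Rightarrow> nat \<Rightarrow> complex" where
  "Smat d m j = (if m = j then wpow d (int j * (int j + 1) div 2) else 0)"

definition one_qudit :: "nat \<Rightarrow> nat \<Rightarrow> (nat \<Rightarrow> nat \<Rightarrow> complex) \<Rightarrow> nat \<Rightarrow> op" where
  "one_qudit d n G i = restr d n (\<lambda>x y.
     if (\<forall>j. j \<noteq> i \<longrightarrow> x j = y j) then G (x i) (y i) else 0)"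

definition cx_gate :: "nat \<Rightarrow> nat \<Rightarrow> nat \<Rightarrow> nat \<Rightarrow> op" where
  "cx_gate d n i j = restr d n (\<lambda>x y.
     if (\<forall>l. l \<noteq> j \<longrightarrow> x l = y l) \<and> x j = (y i + y j) mod d then 1 else 0)"

definition gate :: "nat \<Rightarrow> nat \<Rightarrow> op \<Rightarrow> bool" where
  "gate d n g \<longleftrightarrow>
     (\<exists>i<n. g = one_qudit d n (Fmat d) i \<or> g = one_qudit d n (Smat d) i) \<or>
     (\<exists>i j. i < n \<and> j < n \<and> i \<noteq> j \<and> g = cx_gate d n i j)"

inductive circuit :: "nat \<Rightarrow> nat \<Rightarrow> op \<Rightarrow> bool" for d n where
  circ_id: "circuit d n (ident d n)"
| circ_step: "gate d n g \<Longrightarrow> circuit d n U \<Longrightarrow> circuit d n (mmult d n g U)"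

end

theory Submission
  imports Defs "HOL-Number_Theory.Cong" "HOL-Library.FuncSet"
begin

(*
  Conjugation by F, S or C_X sends the Pauli operator with exponent vectors (a, b) of Z and X
  to a scalar multiple of the Pauli operator with exponents conj_act g (a, b), an explicit linear
  map; so it suffices to find a word of gates whose action sends the exponents of X_1 and Z_1
  to those of X \<otimes> P' and Z \<otimes> Q' modulo d.  Write P' = Z^p X^q and Q' = Z^p' X^q'.  On qudits
  1 and j, the block C_X^q F C_X^p F^3 adds p_j, q_j times the X-exponent of qudit 1 to the
  Z- and X-exponents of qudit j, and S^m on qudit 1 cancels the Z-exponent left on qudit 1.
  Doing this for (p, q), swapping X and Z on qudit 1 by F^3, doing it for (p', q') and swapping
  back by F sends Z_1 to Z \<otimes> Q' and X_1 to X^(1 - T) \<otimes> P', where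
  T = sum_j (p'_j q_j - q'_j p_j).  Since (X \<otimes> P', Z \<otimes> Q') = (X_1, Z_1), T = 0 mod d.
*)

section \<open>Roots of unity\<close>

lemma wpow_0 [simp]: "wpow d 0 = 1"
  by (simp add: wpow_def)

lemma wpow_add: "wpow d (a + b) = wpow d a * wpow d b"
  by (simp add: wpow_def cis_mult add_divide_distrib distrib_left)

lemma wpow_of_nat_mult: "wpow d (int t * m) = wpow d m ^ t"
  by (simp add: wpow_def DeMoivre field_simps)

lemma wpow_eq_1_iff:
  assumes "d > 0"
  shows "wpow d m = 1 \<longleftrightarrow> int d dvd m"
proof -
  have "wpow d m = 1 \<longleftrightarrow> cos (2 * pi * of_int m / of_nat d) = 1"
    unfolding wpow_def by (auto simp: complex_eq_iff cos_one_sin_zero)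
  also have "\<dots> \<longleftrightarrow> (\<exists>k::int. real_of_int m = real d * of_int k)"
    using assms by (auto simp: cos_one_2pi_int field_simps)
  also have "\<dots> \<longleftrightarrow> (\<exists>k::int. m = int d * k)"
    by (metis of_int_eq_iff of_int_mult of_int_of_nat_eq)
  finally show ?thesis by (auto simp: dvd_def)
qed

lemma cong_left_iff: "[a = a'] (mod m) \<Longrightarrow> [a = b] (mod m) \<longleftrightarrow> [a' = b] (mod m)"
  by (meson cong_sym cong_trans)

lemma wpow_cong:
  assumes "[m = m'] (mod int d)"
  shows "wpow d m = wpow d m'"
proof -
  obtain k where "m' = m + int d * k" using assms cong_iff_lin by blast
  moreover have "wpow d (int d * k) = 1"
    by (cases "d = 0") (simp_all add: wpow_eq_1_iff)
  ultimately show ?thesis by (simp add: wpow_add)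
qed

lemma sum_wpow_of_nat_mult:
  assumes "d > 0"
  shows "(\<Sum>t<d. wpow d (int t * m)) = (if int d dvd m then of_nat d else 0)"
proof (cases "int d dvd m")
  case False
  have "wpow d m ^ d = 1" using assms by (simp flip: wpow_of_nat_mult add: wpow_eq_1_iff)
  then show ?thesis using False assms by (simp add: wpow_of_nat_mult sum_gp_strict wpow_eq_1_iff)
next
  case True
  then have "wpow d m = 1" using assms by (simp add: wpow_eq_1_iff)
  then show ?thesis using True by (simp add: wpow_of_nat_mult)
qed

section \<open>Operators on the computational basis\<close>

lemma finite_basis: "finite (basis d n)"
proof -
  have "basis d n \<subseteq> (\<lambda>g i. if i < n then g i else 0) ` (PiE {..<n} (\<lambda>_. {..<d}))"
  proof
    fix f assume "f \<in> basis d n"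
    then show "f \<in> (\<lambda>g i. if i < n then g i else 0) ` (PiE {..<n} (\<lambda>_. {..<d}))"
      by (intro image_eqI[where x = "restrict f {..<n}"]) (auto simp: basis_def fun_eq_iff)
  qed
  then show ?thesis by (rule finite_subset) (intro finite_imageI finite_PiE; simp)
qed

lemma basis_less: "x \<in> basis d n \<Longrightarrow> i < n \<Longrightarrow> x i < d"
  by (simp add: basis_def)

lemma fun_upd_in_basis: "x \<in> basis d n \<Longrightarrow> i < n \<Longrightarrow> t < d \<Longrightarrow> x(i := t) \<in> basis d n"
  by (simp add: basis_def)

lemma restr_apply [simp]:
  "restr d n M x y = (if x \<in> basis d n \<and> y \<in> basis d n then M x y else 0)"
  by (simp add: restr_def)

lemma op_eqI:
  assumes "\<And>x y. x \<in> basis d n \<Longrightarrow> y \<in> basis d n \<Longrightarrow> A x y = B x y"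
    and "restr d n A = A" and "restr d n B = B"
  shows "A = B"
proof -
  have "restr d n A = restr d n B" using assms(1) by (simp add: fun_eq_iff)
  then show ?thesis using assms(2,3) by simp
qed

lemma mmult_apply:
  "x \<in> basis d n \<Longrightarrow> y \<in> basis d n \<Longrightarrow> mmult d n A B x y = (\<Sum>z\<in>basis d n. A x z * B z y)"
  by (simp add: mmult_def)

lemma restr_mmult [simp]: "restr d n (mmult d n A B) = mmult d n A B"
  by (auto simp: mmult_def fun_eq_iff)

lemma restr_restr [simp]: "restr d n (restr d n M) = restr d n M"
  by (simp add: fun_eq_iff)

lemma restr_ident [simp]: "restr d n (ident d n) = ident d n"
  by (auto simp: ident_def fun_eq_iff)

lemma restr_scal: "restr d n (scal c M) = scal c (restr d n M)"
  by (auto simp: scal_def fun_eq_iff)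

lemma mmult_restr_right [simp]: "mmult d n A (restr d n B) = mmult d n A B"
  by (auto simp: mmult_def fun_eq_iff intro!: sum.cong)

lemma mmult_assoc: "mmult d n (mmult d n A B) C = mmult d n A (mmult d n B C)"
proof (rule op_eqI)
  fix x y assume xy: "x \<in> basis d n" "y \<in> basis d n"
  have "mmult d n (mmult d n A B) C x y = (\<Sum>z\<in>basis d n. \<Sum>w\<in>basis d n. A x w * B w z * C z y)"
    using xy by (simp add: mmult_apply sum_distrib_right)
  also have "\<dots> = (\<Sum>w\<in>basis d n. \<Sum>z\<in>basis d n. A x w * B w z * C z y)"
    by (rule sum.swap)
  also have "\<dots> = mmult d n A (mmult d n B C) x y"
    using xy by (simp add: mmult_apply sum_distrib_left mult.assoc)
  finally show "mmult d n (mmult d n A B) C x y = mmult d n A (mmult d n B C) x y" .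
qed simp_all

lemma mmult_ident_left [simp]: "mmult d n (ident d n) M = restr d n M"
proof (rule op_eqI)
  fix x y assume xy: "x \<in> basis d n" "y \<in> basis d n"
  then have "mmult d n (ident d n) M x y = (\<Sum>z\<in>basis d n. if x = z then M z y else 0)"
    by (auto simp: mmult_apply ident_def intro!: sum.cong)
  then show "mmult d n (ident d n) M x y = restr d n M x y"
    using xy by (simp add: finite_basis)
qed simp_all

lemma mmult_ident_right [simp]: "mmult d n M (ident d n) = restr d n M"
proof (rule op_eqI)
  fix x y assume xy: "x \<in> basis d n" "y \<in> basis d n"
  then have "mmult d n M (ident d n) x y = (\<Sum>z\<in>basis d n. if z = y then M x z else 0)"
    by (auto simp: mmult_apply ident_def intro!: sum.cong)
  then show "mmult d n M (ident d n) x y = restr d n M x y"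
    using xy by (simp add: finite_basis)
qed simp_all

lemma mmult_scal_left: "mmult d n (scal c A) B = scal c (mmult d n A B)"
  by (auto simp: mmult_def scal_def sum_distrib_left mult.assoc fun_eq_iff)

lemma mmult_scal_right: "mmult d n A (scal c B) = scal c (mmult d n A B)"
  by (auto simp: mmult_def scal_def sum_distrib_left mult.left_commute fun_eq_iff)

lemma scal_scal: "scal c (scal c' M) = scal (c * c') M"
  by (simp add: scal_def mult.assoc)

definition invertible_op :: "nat \<Rightarrow> nat \<Rightarrow> op \<Rightarrow> bool" where
  "invertible_op d n U \<longleftrightarrow> (\<exists>V. mmult d n U V = ident d n \<and> mmult d n V U = ident d n)"

lemma invertible_op_ident: "invertible_op d n (ident d n)"
  unfolding invertible_op_def by (intro exI[of _ "ident d n"]) simp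

lemma invertible_op_mmult:
  assumes "invertible_op d n A" and "invertible_op d n B"
  shows "invertible_op d n (mmult d n A B)"
proof -
  obtain A' where A: "mmult d n A A' = ident d n" "mmult d n A' A = ident d n"
    using assms(1) by (auto simp: invertible_op_def)
  obtain B' where B: "mmult d n B B' = ident d n" "mmult d n B' B = ident d n"
    using assms(2) by (auto simp: invertible_op_def)
  have "mmult d n (mmult d n A B) (mmult d n B' A') = mmult d n A (mmult d n (mmult d n B B') A')"
    by (simp add: mmult_assoc)
  moreover have "mmult d n (mmult d n B' A') (mmult d n A B) = mmult d n B' (mmult d n (mmult d n A' A) B)"
    by (simp add: mmult_assoc)
  ultimately have "mmult d n (mmult d n A B) (mmult d n B' A') = ident d n"
    and "mmult d n (mmult d n B' A') (mmult d n A B) = ident d n"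
    by (simp_all add: A B)
  then show ?thesis unfolding invertible_op_def by blast
qed

section \<open>Pauli operators\<close>

definition pauli_factor :: "nat \<Rightarrow> int \<Rightarrow> int \<Rightarrow> nat \<Rightarrow> nat \<Rightarrow> complex" where
  "pauli_factor d a b s t = (if int s = (int t + b) mod int d then wpow d (a * int s) else 0)"

lemma pauli_eq_restr_prod:
  "pauli d n k a b = restr d n (\<lambda>x y. wpow d k * (\<Prod>l<n. pauli_factor d (a l) (b l) (x l) (y l)))"
  by (simp add: pauli_def pauli_factor_def)

lemma restr_pauli [simp]: "restr d n (pauli d n k a b) = pauli d n k a b"
  by (simp add: pauli_eq_restr_prod)

lemma pauli_apply:
  "x \<in> basis d n \<Longrightarrow> y \<in> basis d n \<Longrightarrow>
    pauli d n k a b x y = wpow d k * (\<Prod>l<n. pauli_factor d (a l) (b l) (x l) (y l))"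
  by (simp add: pauli_eq_restr_prod)

lemma pauli_factor_eq:
  "s < d \<Longrightarrow> pauli_factor d a b s t = (if [int s = int t + b] (mod int d) then wpow d (a * int s) else 0)"
  by (simp add: pauli_factor_def cong_def)

lemma pauli_factor_cong:
  assumes "[a = a'] (mod int d)" and "[b = b'] (mod int d)"
  shows "pauli_factor d a b s t = pauli_factor d a' b' s t"
proof -
  have "(int t + b) mod int d = (int t + b') mod int d"
    using cong_add[OF cong_refl assms(2)] by (simp add: cong_def)
  moreover have "wpow d (a * int s) = wpow d (a' * int s)"
    by (intro wpow_cong cong_scalar_right assms(1))
  ultimately show ?thesis unfolding pauli_factor_def by (simp only:)
qed

definition exps_cong :: "nat \<Rightarrow> nat \<Rightarrow> (nat \<Rightarrow> int) \<times> (nat \<Rightarrow> int) \<Rightarrow> (nat \<Rightarrow> int) \<times> (nat \<Rightarrow> int) \<Rightarrow> bool" where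
  "exps_cong d n v w \<longleftrightarrow> (\<forall>i<n. [fst v i = fst w i] (mod int d) \<and> [snd v i = snd w i] (mod int d))"

lemma pauli_cong:
  assumes "exps_cong d n v w"
  shows "pauli d n k (fst v) (snd v) = pauli d n k (fst w) (snd w)"
proof -
  have "(\<Prod>l<n. pauli_factor d (fst v l) (snd v l) (x l) (y l)) =
      (\<Prod>l<n. pauli_factor d (fst w l) (snd w l) (x l) (y l))"
    for x y using assms by (intro prod.cong) (simp_all add: exps_cong_def pauli_factor_cong)
  then show ?thesis unfolding pauli_eq_restr_prod by simp
qed

lemma pauli_change_phase: "pauli d n k a b = scal (wpow d (k - k')) (pauli d n k' a b)"
  by (auto simp: pauli_def scal_def fun_eq_iff mult.assoc simp flip: wpow_add)

lemma pauli_apply_site: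
  "x \<in> basis d n \<Longrightarrow> y \<in> basis d n \<Longrightarrow> i < n \<Longrightarrow> pauli d n k a b x y =
    wpow d k * pauli_factor d (a i) (b i) (x i) (y i) *
    (\<Prod>l\<in>{..<n}-{i}. pauli_factor d (a l) (b l) (x l) (y l))"
  by (simp add: pauli_apply prod.remove mult.assoc)

section \<open>Single-qudit gates\<close>

lemma sum_basis_site:
  assumes "x \<in> basis d n" and "i < n"
  shows "(\<Sum>z\<in>basis d n. if \<forall>j. j \<noteq> i \<longrightarrow> z j = x j then f z else 0) = (\<Sum>t<d. f (x(i := t)))"
proof -
  have "{z \<in> basis d n. \<forall>j. j \<noteq> i \<longrightarrow> z j = x j} = (\<lambda>t. x(i := t)) ` {..<d}"
  proof (intro equalityI subsetI)
    fix z assume z: "z \<in> {z \<in> basis d n. \<forall>j. j \<noteq> i \<longrightarrow> z j = x j}"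
    then have "z = x(i := z i)" by (auto simp: fun_eq_iff)
    moreover have "z i < d" using z assms(2) by (simp add: basis_def)
    ultimately show "z \<in> (\<lambda>t. x(i := t)) ` {..<d}" by blast
  qed (use assms fun_upd_in_basis in auto)
  moreover have "inj_on (\<lambda>t. x(i := t)) {..<d}"
    by (rule inj_onI) (metis fun_upd_same)
  ultimately show ?thesis
    by (simp add: sum.inter_filter[symmetric] finite_basis sum.reindex)
qed

lemma one_qudit_apply:
  "x \<in> basis d n \<Longrightarrow> y \<in> basis d n \<Longrightarrow>
    one_qudit d n G i x y = (if \<forall>j. j \<noteq> i \<longrightarrow> x j = y j then G (x i) (y i) else 0)"
  by (simp add: one_qudit_def)

lemma mmult_one_qudit_left:
  assumes "x \<in> basis d n" "y \<in> basis d n" "i < n"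
  shows "mmult d n (one_qudit d n G i) M x y = (\<Sum>t<d. G (x i) t * M (x(i := t)) y)"
proof -
  have "mmult d n (one_qudit d n G i) M x y =
      (\<Sum>z\<in>basis d n. if \<forall>j. j \<noteq> i \<longrightarrow> z j = x j then G (x i) (z i) * M z y else 0)"
    using assms by (auto simp: mmult_apply one_qudit_apply intro!: sum.cong)
  then show ?thesis using sum_basis_site[OF assms(1,3), of "\<lambda>z. G (x i) (z i) * M z y"] by simp
qed

lemma mmult_one_qudit_right:
  assumes "x \<in> basis d n" "y \<in> basis d n" "i < n"
  shows "mmult d n M (one_qudit d n G i) x y = (\<Sum>t<d. M x (y(i := t)) * G t (y i))"
proof -
  have "mmult d n M (one_qudit d n G i) x y =
      (\<Sum>z\<in>basis d n. if \<forall>j. j \<noteq> i \<longrightarrow> z j = y j then M x z * G (z i) (y i) else 0)"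
    using assms by (auto simp: mmult_apply one_qudit_apply intro!: sum.cong)
  then show ?thesis using sum_basis_site[OF assms(2,3), of "\<lambda>z. M x z * G (z i) (y i)"] by simp
qed

lemma one_qudit_pauli_intertwine:
  assumes i: "i < n"
    and on_site: "\<forall>s<d. \<forall>u<d. (\<Sum>t<d. G s t * pauli_factor d (a i) (b i) t u) =
                              c * (\<Sum>t<d. pauli_factor d a' b' s t * G t u)"
  shows "mmult d n (one_qudit d n G i) (pauli d n k a b) =
    scal c (mmult d n (pauli d n k (a(i := a')) (b(i := b'))) (one_qudit d n G i))"
proof (rule op_eqI)
  fix x y assume x: "x \<in> basis d n" and y: "y \<in> basis d n"
  define R where "R = (\<Prod>l\<in>{..<n}-{i}. pauli_factor d (a l) (b l) (x l) (y l))"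
  have "mmult d n (one_qudit d n G i) (pauli d n k a b) x y =
      (\<Sum>t<d. G (x i) t * (wpow d k * pauli_factor d (a i) (b i) t (y i) * R))"
    using x y i fun_upd_in_basis[OF x i]
    by (simp add: mmult_one_qudit_left pauli_apply_site[of _ d n _ i] R_def)
  also have "\<dots> = wpow d k * R * (\<Sum>t<d. G (x i) t * pauli_factor d (a i) (b i) t (y i))"
    by (simp add: sum_distrib_left mult_ac)
  also have "\<dots> = c * (\<Sum>t<d. wpow d k * pauli_factor d a' b' (x i) t * R * G t (y i))"
    using on_site basis_less[OF x i] basis_less[OF y i] by (simp add: sum_distrib_left mult_ac)
  also have "\<dots> = scal c (mmult d n (pauli d n k (a(i := a')) (b(i := b'))) (one_qudit d n G i)) x y"
    using x y i fun_upd_in_basis[OF y i]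
    by (simp add: scal_def mmult_one_qudit_right pauli_apply_site[of _ d n _ i] R_def)
  finally show "mmult d n (one_qudit d n G i) (pauli d n k a b) x y =
      scal c (mmult d n (pauli d n k (a(i := a')) (b(i := b'))) (one_qudit d n G i)) x y" .
qed (simp_all add: restr_scal)

lemma one_qudit_mmult:
  assumes i: "i < n"
  shows "mmult d n (one_qudit d n G i) (one_qudit d n H i) = one_qudit d n (\<lambda>s u. \<Sum>t<d. G s t * H t u) i"
proof (rule op_eqI)
  fix x y assume x: "x \<in> basis d n" and y: "y \<in> basis d n"
  have "mmult d n (one_qudit d n G i) (one_qudit d n H i) x y =
      (\<Sum>t<d. G (x i) t * one_qudit d n H i (x(i := t)) y)"
    using x y i by (rule mmult_one_qudit_left)
  also have "\<dots> = (if \<forall>j. j \<noteq> i \<longrightarrow> x j = y j then \<Sum>t<d. G (x i) t * H t (y i) else 0)"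
    using x y i by (auto simp: one_qudit_apply fun_upd_in_basis intro!: sum.neutral sum.cong)
  finally show "mmult d n (one_qudit d n G i) (one_qudit d n H i) x y =
      one_qudit d n (\<lambda>s u. \<Sum>t<d. G s t * H t u) i x y"
    using x y by (simp add: one_qudit_apply)
qed (simp_all add: one_qudit_def)

lemma one_qudit_eq_ident:
  assumes "i < n" and "\<forall>s<d. \<forall>u<d. G s u = of_bool (s = u)"
  shows "one_qudit d n G i = ident d n"
proof (rule op_eqI)
  fix x y assume "x \<in> basis d n" and "y \<in> basis d n"
  moreover have "(\<forall>j. j \<noteq> i \<longrightarrow> x j = y j) \<and> x i = y i \<longleftrightarrow> x = y"
    by (auto simp: fun_eq_iff)
  ultimately show "one_qudit d n G i x y = ident d n x y"
    using assms basis_less by (auto simp: one_qudit_apply ident_def)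
qed (simp_all add: one_qudit_def)

lemma invertible_one_qudit:
  assumes "i < n"
    and "\<forall>s<d. \<forall>u<d. (\<Sum>t<d. G s t * H t u) = of_bool (s = u)"
    and "\<forall>s<d. \<forall>u<d. (\<Sum>t<d. H s t * G t u) = of_bool (s = u)"
  shows "invertible_op d n (one_qudit d n G i)"
  unfolding invertible_op_def using assms
  by (intro exI[of _ "one_qudit d n H i"]) (simp add: one_qudit_mmult one_qudit_eq_ident)

lemma sum_single_residue:
  assumes "d > 0"
  shows "(\<Sum>t<d. if [int t = X] (mod int d) then g (int t) else 0) = g (X mod int d)"
proof -
  have "[int t = X] (mod int d) \<longleftrightarrow> t = nat (X mod int d)" if "t < d" for t
    using that assms by (auto simp: cong_def)
  then have "(\<Sum>t<d. if [int t = X] (mod int d) then g (int t) else 0) =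
      (\<Sum>t<d. if t = nat (X mod int d) then g (int t) else 0)"
    by (intro sum.cong) auto
  also have "\<dots> = g (X mod int d)"
    using assms by (simp add: nat_less_iff)
  finally show ?thesis .
qed

lemma Fmat_intertwine:
  assumes d: "d > 0" and s: "s < d"
  shows "(\<Sum>t<d. Fmat d s t * pauli_factor d a b t u) =
    wpow d (a * b) * (\<Sum>t<d. pauli_factor d b (- a) s t * Fmat d t u)"
proof -
  let ?r = "complex_of_real (sqrt (real d))"
  have "(\<Sum>t<d. Fmat d s t * pauli_factor d a b t u) =
      (\<Sum>t<d. if [int t = int u + b] (mod int d) then wpow d (int t * int s + a * int t) / ?r else 0)"
    by (intro sum.cong) (auto simp: pauli_factor_eq Fmat_def wpow_add)
  also have "\<dots> = wpow d ((int u + b) mod int d * int s + a * ((int u + b) mod int d)) / ?r"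
    using sum_single_residue[OF d, of "int u + b" "\<lambda>v. wpow d (v * int s + a * v) / ?r"] by simp
  also have "\<dots> = wpow d ((int u + b) * int s + a * (int u + b)) / ?r"
    by (intro arg_cong[where f = "\<lambda>z. z / ?r"] wpow_cong cong_add cong_mult cong_refl) simp_all
  finally have lhs: "(\<Sum>t<d. Fmat d s t * pauli_factor d a b t u) =
      wpow d ((int u + b) * int s + a * (int u + b)) / ?r" .
  have flip: "[int s = int t - a] (mod int d) \<longleftrightarrow> [int t = int s + a] (mod int d)" for t
  proof -
    have "int s - (int t - a) = - (int t - (int s + a))" by simp
    then show ?thesis by (simp only: cong_iff_dvd_diff dvd_minus_iff)
  qed
  have "(\<Sum>t<d. pauli_factor d b (- a) s t * Fmat d t u) =
      (\<Sum>t<d. if [int t = int s + a] (mod int d) then wpow d (b * int s + int u * int t) / ?r else 0)"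
    using s by (intro sum.cong) (auto simp: pauli_factor_eq flip Fmat_def wpow_add)
  also have "\<dots> = wpow d (b * int s + int u * ((int s + a) mod int d)) / ?r"
    using sum_single_residue[OF d, of "int s + a" "\<lambda>v. wpow d (b * int s + int u * v) / ?r"] by simp
  also have "\<dots> = wpow d (b * int s + int u * (int s + a)) / ?r"
    by (intro arg_cong[where f = "\<lambda>z. z / ?r"] wpow_cong cong_add cong_mult cong_refl) simp_all
  finally have rhs: "(\<Sum>t<d. pauli_factor d b (- a) s t * Fmat d t u) =
      wpow d (b * int s + int u * (int s + a)) / ?r" .
  show ?thesis
    unfolding lhs rhs by (simp flip: wpow_add add: algebra_simps)
qed

lemma sum_wpow_delta:
  assumes "d > 0" "s < d" "u < d"
  shows "(\<Sum>t<d. wpow d (int t * (int s - int u)) / of_nat d) = of_bool (s = u)"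
proof -
  have "int d dvd (int s - int u) \<longleftrightarrow> s = u"
    using assms cong_less_imp_eq_int[of "int s" "int d" "int u"] by (auto simp flip: cong_iff_dvd_diff)
  then show ?thesis
    using assms by (simp flip: sum_divide_distrib add: sum_wpow_of_nat_mult)
qed

definition Fmat_inv :: "nat \<Rightarrow> nat \<Rightarrow> nat \<Rightarrow> complex" where
  "Fmat_inv d m j = wpow d (- (int j * int m)) / complex_of_real (sqrt (real d))"

lemma Fmat_inverse:
  assumes "d > 0" "s < d" "u < d"
  shows "(\<Sum>t<d. Fmat d s t * Fmat_inv d t u) = of_bool (s = u)"
    and "(\<Sum>t<d. Fmat_inv d s t * Fmat d t u) = of_bool (s = u)"
proof -
  let ?r = "complex_of_real (sqrt (real d))"
  have r: "?r * ?r = of_nat d"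
    by (simp flip: of_real_mult)
  have "Fmat d s t * Fmat_inv d t u = wpow d (int t * int s + - (int u * int t)) / of_nat d" for t
    by (simp add: Fmat_def Fmat_inv_def r flip: wpow_add)
  then show "(\<Sum>t<d. Fmat d s t * Fmat_inv d t u) = of_bool (s = u)"
    using sum_wpow_delta[OF assms] by (simp add: algebra_simps)
  have "Fmat_inv d s t * Fmat d t u = wpow d (- (int t * int s) + int u * int t) / of_nat d" for t
    by (simp add: Fmat_def Fmat_inv_def r flip: wpow_add)
  then show "(\<Sum>t<d. Fmat_inv d s t * Fmat d t u) = of_bool (s = u)"
    using sum_wpow_delta[OF assms(1,3,2)] by (auto simp: algebra_simps)
qed

definition tri :: "int \<Rightarrow> int" where
  "tri v = v * (v + 1) div 2"

lemma two_tri: "2 * tri v = v * (v + 1)"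
  by (simp add: tri_def)

lemma Smat_eq: "Smat d m j = (if m = j then wpow d (tri (int j)) else 0)"
  by (simp add: Smat_def tri_def)

lemma Smat_intertwine:
  assumes d: "odd d" and s: "s < d" and u: "u < d"
  shows "(\<Sum>t<d. Smat d s t * pauli_factor d a b t u) =
    wpow d (tri b - b * b) * (\<Sum>t<d. pauli_factor d (a + b) b s t * Smat d t u)"
proof -
  have "Smat d s t * pauli_factor d a b t u = (if t = s then wpow d (tri (int s)) * pauli_factor d a b s u else 0)"
    and "pauli_factor d (a + b) b s t * Smat d t u = (if t = u then pauli_factor d (a + b) b s u * wpow d (tri (int u)) else 0)"
    for t by (simp_all add: Smat_eq)
  then have lhs: "(\<Sum>t<d. Smat d s t * pauli_factor d a b t u) = wpow d (tri (int s)) * pauli_factor d a b s u"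
    and rhs: "(\<Sum>t<d. pauli_factor d (a + b) b s t * Smat d t u) = pauli_factor d (a + b) b s u * wpow d (tri (int u))"
    using s u by simp_all
  show ?thesis
  proof (cases "[int s = int u + b] (mod int d)")
    case True
    then have "[int u + b = int s] (mod int d)" by (rule cong_sym)
    then obtain q where q: "int s = int u + b + int d * q" by (auto simp: cong_iff_lin)
    have "2 * (tri (int s) + a * int s) - 2 * (tri b - b * b + (a + b) * int s + tri (int u)) =
        int d * (q * (2 * int u + int d * q + 1))"
      unfolding distrib_left right_diff_distrib two_tri q by (simp add: algebra_simps)
    then have "[2 * (tri (int s) + a * int s) = 2 * (tri b - b * b + (a + b) * int s + tri (int u))] (mod int d)"
      by (simp add: cong_iff_dvd_diff)
    \<comment> \<open>\<open>tri\<close> halves, so the factor 2 has to be cancelled: this is where \<open>d\<close> must be odd\<close>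
    moreover have "coprime 2 (int d)" using d by simp
    ultimately have "[tri (int s) + a * int s = tri b - b * b + (a + b) * int s + tri (int u)] (mod int d)"
      using cong_mult_lcancel by blast
    then have "wpow d (tri (int s) + a * int s) = wpow d (tri b - b * b + (a + b) * int s + tri (int u))"
      by (rule wpow_cong)
    then show ?thesis
      using True s unfolding lhs rhs by (simp add: pauli_factor_eq wpow_add mult_ac)
  next
    case False
    then show ?thesis using s unfolding lhs rhs by (simp add: pauli_factor_eq)
  qed
qed

definition Smat_inv :: "nat \<Rightarrow> nat \<Rightarrow> nat \<Rightarrow> complex" where
  "Smat_inv d m j = (if m = j then wpow d (- tri (int j)) else 0)"

lemma Smat_inverse:
  assumes "s < d" "u < d"
  shows "(\<Sum>t<d. Smat d s t * Smat_inv d t u) = of_bool (s = u)"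
    and "(\<Sum>t<d. Smat_inv d s t * Smat d t u) = of_bool (s = u)"
proof -
  have "Smat d s t * Smat_inv d t u = (if t = s then of_bool (s = u) else 0)"
    and "Smat_inv d s t * Smat d t u = (if t = s then of_bool (s = u) else 0)" for t
    by (auto simp: Smat_eq Smat_inv_def simp flip: wpow_add)
  then show "(\<Sum>t<d. Smat d s t * Smat_inv d t u) = of_bool (s = u)"
    and "(\<Sum>t<d. Smat_inv d s t * Smat d t u) = of_bool (s = u)"
    using assms by simp_all
qed

section \<open>The controlled-X gate\<close>

definition perm_op :: "nat \<Rightarrow> nat \<Rightarrow> ((nat \<Rightarrow> nat) \<Rightarrow> nat \<Rightarrow> nat) \<Rightarrow> op" where
  "perm_op d n \<sigma> = restr d n (\<lambda>x y. of_bool (x = \<sigma> y))"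

definition basis_perm_pair ::
    "nat \<Rightarrow> nat \<Rightarrow> ((nat \<Rightarrow> nat) \<Rightarrow> nat \<Rightarrow> nat) \<Rightarrow> ((nat \<Rightarrow> nat) \<Rightarrow> nat \<Rightarrow> nat) \<Rightarrow> bool" where
  "basis_perm_pair d n \<sigma> \<tau> \<longleftrightarrow>
     (\<forall>x\<in>basis d n. \<sigma> x \<in> basis d n \<and> \<tau> x \<in> basis d n \<and> \<tau> (\<sigma> x) = x \<and> \<sigma> (\<tau> x) = x)"

lemma mmult_perm_op_left:
  assumes "basis_perm_pair d n \<sigma> \<tau>"
  shows "mmult d n (perm_op d n \<sigma>) M = restr d n (\<lambda>x y. M (\<tau> x) y)"
proof (rule op_eqI)
  fix x y assume x: "x \<in> basis d n" and y: "y \<in> basis d n"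
  have "x = \<sigma> z \<longleftrightarrow> z = \<tau> x" if "z \<in> basis d n" for z
    using assms x that by (auto simp: basis_perm_pair_def)
  then have "mmult d n (perm_op d n \<sigma>) M x y = (\<Sum>z\<in>basis d n. if z = \<tau> x then M z y else 0)"
    using x y by (auto simp: mmult_apply perm_op_def intro!: sum.cong)
  then show "mmult d n (perm_op d n \<sigma>) M x y = restr d n (\<lambda>x y. M (\<tau> x) y) x y"
    using assms x y by (simp add: finite_basis basis_perm_pair_def)
qed simp_all

lemma mmult_perm_op_right:
  assumes "basis_perm_pair d n \<sigma> \<tau>"
  shows "mmult d n M (perm_op d n \<sigma>) = restr d n (\<lambda>x y. M x (\<sigma> y))"
proof (rule op_eqI)
  fix x y assume x: "x \<in> basis d n" and y: "y \<in> basis d n"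
  then have "mmult d n M (perm_op d n \<sigma>) x y = (\<Sum>z\<in>basis d n. if z = \<sigma> y then M x z else 0)"
    by (auto simp: mmult_apply perm_op_def intro!: sum.cong)
  then show "mmult d n M (perm_op d n \<sigma>) x y = restr d n (\<lambda>x y. M x (\<sigma> y)) x y"
    using assms x y by (simp add: finite_basis basis_perm_pair_def)
qed simp_all

lemma invertible_perm_op:
  assumes "basis_perm_pair d n \<sigma> \<tau>"
  shows "invertible_op d n (perm_op d n \<sigma>)"
proof -
  have "mmult d n (perm_op d n \<sigma>) (perm_op d n \<tau>) = ident d n"
  proof (rule op_eqI)
    fix x y assume "x \<in> basis d n" "y \<in> basis d n"
    moreover from this have "\<tau> x = \<tau> y \<longleftrightarrow> x = y"
      using assms unfolding basis_perm_pair_def by metis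
    ultimately show "mmult d n (perm_op d n \<sigma>) (perm_op d n \<tau>) x y = ident d n x y"
      unfolding mmult_perm_op_left[OF assms] using assms
      by (simp add: perm_op_def ident_def basis_perm_pair_def)
  qed simp_all
  moreover have "mmult d n (perm_op d n \<tau>) (perm_op d n \<sigma>) = ident d n"
  proof (rule op_eqI)
    fix x y assume "x \<in> basis d n" "y \<in> basis d n"
    then show "mmult d n (perm_op d n \<tau>) (perm_op d n \<sigma>) x y = ident d n x y"
      unfolding mmult_perm_op_right[OF assms] using assms
      by (simp add: perm_op_def ident_def basis_perm_pair_def)
  qed simp_all
  ultimately show ?thesis by (auto simp: invertible_op_def)
qed

definition cx_shift :: "nat \<Rightarrow> nat \<Rightarrow> nat \<Rightarrow> (nat \<Rightarrow> nat) \<Rightarrow> nat \<Rightarrow> nat" where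
  "cx_shift d i j y = y(j := (y i + y j) mod d)"

definition cx_unshift :: "nat \<Rightarrow> nat \<Rightarrow> nat \<Rightarrow> (nat \<Rightarrow> nat) \<Rightarrow> nat \<Rightarrow> nat" where
  "cx_unshift d i j x = x(j := (x j + d - x i) mod d)"

lemma cx_gate_eq_perm_op: "cx_gate d n i j = perm_op d n (cx_shift d i j)"
proof -
  have "(\<forall>l. l \<noteq> j \<longrightarrow> x l = y l) \<and> x j = (y i + y j) mod d \<longleftrightarrow> x = cx_shift d i j y" for x y
    by (auto simp: cx_shift_def fun_eq_iff)
  then show ?thesis by (simp add: cx_gate_def perm_op_def of_bool_def)
qed

lemma basis_perm_pair_cx:
  assumes "i \<noteq> j" "i < n" "j < n" "d > 0"
  shows "basis_perm_pair d n (cx_shift d i j) (cx_unshift d i j)"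
  unfolding basis_perm_pair_def
proof (intro ballI conjI)
  fix x assume x: "x \<in> basis d n"
  then have xi: "x i < d" and xj: "x j < d" using assms basis_less by auto
  show "cx_shift d i j x \<in> basis d n" "cx_unshift d i j x \<in> basis d n"
    using x assms by (simp_all add: cx_shift_def cx_unshift_def fun_upd_in_basis)
  show "cx_unshift d i j (cx_shift d i j x) = x" "cx_shift d i j (cx_unshift d i j x) = x"
    using xi xj assms(1) by (auto simp: cx_shift_def cx_unshift_def fun_eq_iff mod_if)
qed

lemma cx_pauli_factors:
  assumes d: "d > 0" and s: "si < d" "sj < d"
  shows "pauli_factor d ai bi si ti * pauli_factor d aj bj ((sj + d - si) mod d) tj =
    pauli_factor d (ai - aj) bi si ti * pauli_factor d aj (bj + bi) sj ((ti + tj) mod d)"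
proof (cases "[int si = int ti + bi] (mod int d)")
  case True
  have unshift: "[int ((sj + d - si) mod d) = int sj - int si] (mod int d)"
  proof -
    have "int ((sj + d - si) mod d) = (int sj - int si + int d) mod int d"
      using s by (simp add: of_nat_mod of_nat_diff algebra_simps)
    then show ?thesis by (simp add: cong_def)
  qed
  have shift: "[int ((ti + tj) mod d) = int ti + int tj] (mod int d)"
    by (simp add: of_nat_mod cong_def)
  have "[int ((sj + d - si) mod d) = int tj + bj] (mod int d) \<longleftrightarrow>
      [int sj - (int ti + bi) = int tj + bj] (mod int d)"
    using cong_left_iff[OF unshift] cong_left_iff[OF cong_diff[OF cong_refl True]] by simp
  also have "\<dots> \<longleftrightarrow> [int ti + int tj + (bj + bi) = int sj] (mod int d)"
  proof -
    have "int sj - (int ti + bi) - (int tj + bj) = - (int ti + int tj + (bj + bi) - int sj)" by simp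
    then show ?thesis by (simp only: cong_iff_dvd_diff dvd_minus_iff)
  qed
  also have "\<dots> \<longleftrightarrow> [int sj = int ((ti + tj) mod d) + (bj + bi)] (mod int d)"
    using cong_left_iff[OF cong_add[OF shift cong_refl]] by (simp add: cong_sym_eq)
  finally have support: "[int ((sj + d - si) mod d) = int tj + bj] (mod int d) \<longleftrightarrow>
      [int sj = int ((ti + tj) mod d) + (bj + bi)] (mod int d)" .
  have "wpow d (ai * int si + aj * int ((sj + d - si) mod d)) = wpow d (ai * int si + aj * (int sj - int si))"
    by (intro wpow_cong cong_add cong_refl cong_scalar_left unshift)
  also have "\<dots> = wpow d ((ai - aj) * int si + aj * int sj)"
    by (rule arg_cong[where f = "wpow d"]) (simp add: algebra_simps)
  finally show ?thesis
    using True s support by (simp add: pauli_factor_eq flip: wpow_add)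
next
  case False
  then show ?thesis using s by (simp add: pauli_factor_eq)
qed

lemma cx_pauli_intertwine:
  assumes ij: "i \<noteq> j" "i < n" "j < n" and d: "d > 0"
  shows "mmult d n (cx_gate d n i j) (pauli d n k a b) =
    mmult d n (pauli d n k (a(i := a i - a j)) (b(j := b j + b i))) (cx_gate d n i j)"
proof -
  let ?a' = "a(i := a i - a j)" and ?b' = "b(j := b j + b i)"
  have pair: "basis_perm_pair d n (cx_shift d i j) (cx_unshift d i j)"
    by (rule basis_perm_pair_cx[OF ij d])
  have split: "(\<Prod>l<n. f l) = f i * f j * (\<Prod>l\<in>{..<n}-{i}-{j}. f l)" for f :: "nat \<Rightarrow> complex"
    using ij by (simp add: prod.remove[of "{..<n}" i] prod.remove[of "{..<n}-{i}" j] mult.assoc)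
  have "pauli d n k a b (cx_unshift d i j x) y = pauli d n k ?a' ?b' x (cx_shift d i j y)"
    if x: "x \<in> basis d n" and y: "y \<in> basis d n" for x y
  proof -
    define R where "R = (\<Prod>l\<in>{..<n}-{i}-{j}. pauli_factor d (a l) (b l) (x l) (y l))"
    have ux: "cx_unshift d i j x \<in> basis d n" and sy: "cx_shift d i j y \<in> basis d n"
      using pair x y by (auto simp: basis_perm_pair_def)
    have Rx: "(\<Prod>l\<in>{..<n}-{i}-{j}. pauli_factor d (a l) (b l) (cx_unshift d i j x l) (y l)) = R"
      unfolding R_def by (intro prod.cong) (auto simp: cx_unshift_def)
    have Ry: "(\<Prod>l\<in>{..<n}-{i}-{j}. pauli_factor d (?a' l) (?b' l) (x l) (cx_shift d i j y l)) = R"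
      unfolding R_def by (intro prod.cong) (auto simp: cx_shift_def)
    have "pauli d n k a b (cx_unshift d i j x) y = wpow d k * (pauli_factor d (a i) (b i) (x i) (y i) *
        pauli_factor d (a j) (b j) ((x j + d - x i) mod d) (y j) * R)"
      unfolding pauli_apply[OF ux y] split[where f = "\<lambda>l. pauli_factor d (a l) (b l) (cx_unshift d i j x l) (y l)"] Rx
      using ij by (simp add: cx_unshift_def)
    also have "\<dots> = wpow d k * (pauli_factor d (a i - a j) (b i) (x i) (y i) *
        pauli_factor d (a j) (b j + b i) (x j) ((y i + y j) mod d) * R)"
      using cx_pauli_factors[OF d basis_less[OF x ij(2)] basis_less[OF x ij(3)]] by simp
    also have "\<dots> = pauli d n k ?a' ?b' x (cx_shift d i j y)"
      unfolding pauli_apply[OF x sy] split[where f = "\<lambda>l. pauli_factor d (?a' l) (?b' l) (x l) (cx_shift d i j y l)"] Ry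
      using ij by (simp add: cx_shift_def)
    finally show ?thesis .
  qed
  then show ?thesis
    unfolding cx_gate_eq_perm_op mmult_perm_op_left[OF pair] mmult_perm_op_right[OF pair]
    by (simp add: fun_eq_iff)
qed

section \<open>Gate words and their action on Pauli exponents\<close>

datatype gate_label = F_at nat | S_at nat | CX_at nat nat

fun label_op :: "nat \<Rightarrow> nat \<Rightarrow> gate_label \<Rightarrow> op" where
  "label_op d n (F_at i) = one_qudit d n (Fmat d) i"
| "label_op d n (S_at i) = one_qudit d n (Smat d) i"
| "label_op d n (CX_at i j) = cx_gate d n i j"

fun label_valid :: "nat \<Rightarrow> gate_label \<Rightarrow> bool" where
  "label_valid n (F_at i) \<longleftrightarrow> i < n"
| "label_valid n (S_at i) \<longleftrightarrow> i < n"
| "label_valid n (CX_at i j) \<longleftrightarrow> i < n \<and> j < n \<and> i \<noteq> j"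

fun conj_act :: "gate_label \<Rightarrow> (nat \<Rightarrow> int) \<times> (nat \<Rightarrow> int) \<Rightarrow> (nat \<Rightarrow> int) \<times> (nat \<Rightarrow> int)" where
  "conj_act (F_at i) (a, b) = (a(i := b i), b(i := - a i))"
| "conj_act (S_at i) (a, b) = (a(i := a i + b i), b)"
| "conj_act (CX_at i j) (a, b) = (a(i := a i - a j), b(j := b j + b i))"

lemma gate_label_op: "label_valid n g \<Longrightarrow> gate d n (label_op d n g)"
  by (cases g) (auto simp: gate_def)

lemma invertible_label_op:
  assumes "d > 0" and "label_valid n g"
  shows "invertible_op d n (label_op d n g)"
proof (cases g)
  case (F_at i)
  then show ?thesis using assms Fmat_inverse[OF assms(1)]
    by (auto intro: invertible_one_qudit[where H = "Fmat_inv d"])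
next
  case (S_at i)
  then show ?thesis using assms Smat_inverse
    by (auto intro: invertible_one_qudit[where H = "Smat_inv d"])
next
  case (CX_at i j)
  then show ?thesis using assms
    by (auto simp: cx_gate_eq_perm_op intro: invertible_perm_op basis_perm_pair_cx)
qed

lemma label_op_pauli_intertwine:
  assumes "d > 0" "odd d" "label_valid n g" "conj_act g (a, b) = (a', b')"
  shows "\<exists>c. mmult d n (label_op d n g) (pauli d n k a b) = scal c (mmult d n (pauli d n k a' b') (label_op d n g))"
proof (cases g)
  case (F_at i)
  have "mmult d n (one_qudit d n (Fmat d) i) (pauli d n k a b) = scal (wpow d (a i * b i))
      (mmult d n (pauli d n k (a(i := b i)) (b(i := - a i))) (one_qudit d n (Fmat d) i))"
    using assms F_at by (intro one_qudit_pauli_intertwine) (simp_all add: Fmat_intertwine)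
  then show ?thesis using assms F_at by auto
next
  case (S_at i)
  have "mmult d n (one_qudit d n (Smat d) i) (pauli d n k a b) = scal (wpow d (tri (b i) - b i * b i))
      (mmult d n (pauli d n k (a(i := a i + b i)) (b(i := b i))) (one_qudit d n (Smat d) i))"
    using assms S_at by (intro one_qudit_pauli_intertwine) (simp_all add: Smat_intertwine)
  then show ?thesis using assms S_at by auto
next
  case (CX_at i j)
  then show ?thesis using assms cx_pauli_intertwine[of i j n d k a b]
    by (intro exI[of _ 1]) (auto simp: scal_def)
qed

primrec word_op :: "nat \<Rightarrow> nat \<Rightarrow> gate_label list \<Rightarrow> op" where
  "word_op d n [] = ident d n"
| "word_op d n (g # gs) = mmult d n (label_op d n g) (word_op d n gs)"

lemma circuit_word_op: "\<forall>g\<in>set gs. label_valid n g \<Longrightarrow> circuit d n (word_op d n gs)"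
  by (induction gs) (auto intro: circuit.intros gate_label_op)

lemma invertible_word_op: "d > 0 \<Longrightarrow> \<forall>g\<in>set gs. label_valid n g \<Longrightarrow> invertible_op d n (word_op d n gs)"
  by (induction gs) (auto intro: invertible_op_ident invertible_op_mmult invertible_label_op)

lemma word_op_pauli_intertwine:
  assumes "d > 0" "odd d" "\<forall>g\<in>set gs. label_valid n g" "foldr conj_act gs (a, b) = (a', b')"
  shows "\<exists>c. mmult d n (word_op d n gs) (pauli d n k a b) = scal c (mmult d n (pauli d n k a' b') (word_op d n gs))"
  using assms(3,4)
proof (induction gs arbitrary: a' b')
  case Nil
  then show ?case by (intro exI[of _ 1]) (simp add: scal_def)
next
  case (Cons g gs)
  obtain a'' b'' where inner: "foldr conj_act gs (a, b) = (a'', b'')" by fastforce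
  obtain c where c: "mmult d n (word_op d n gs) (pauli d n k a b) =
      scal c (mmult d n (pauli d n k a'' b'') (word_op d n gs))"
    using Cons inner by auto
  obtain c' where c': "mmult d n (label_op d n g) (pauli d n k a'' b'') =
      scal c' (mmult d n (pauli d n k a' b') (label_op d n g))"
    using Cons.prems inner label_op_pauli_intertwine[OF assms(1,2), of n g a'' b'' a' b' k] by auto
  have "mmult d n (word_op d n (g # gs)) (pauli d n k a b) =
      scal (c * c') (mmult d n (pauli d n k a' b') (word_op d n (g # gs)))"
    by (simp add: mmult_assoc c mmult_scal_right mmult_scal_left scal_scal
        flip: mmult_assoc[of d n "label_op d n g"] add: c')
  then show ?case by blast
qed

lemma word_op_conj_pauli:
  assumes "d > 0" "odd d" "\<forall>g\<in>set gs. label_valid n g" "mmult d n (word_op d n gs) V = ident d n"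
    and "exps_cong d n (foldr conj_act gs (a, b)) (a', b')"
  shows "\<exists>c. mmult d n (mmult d n (word_op d n gs) (pauli d n k a b)) V = scal c (pauli d n k' a' b')"
proof -
  obtain c where "mmult d n (word_op d n gs) (pauli d n k a b) =
      scal c (mmult d n (pauli d n k (fst (foldr conj_act gs (a, b))) (snd (foldr conj_act gs (a, b))))
        (word_op d n gs))"
    using word_op_pauli_intertwine[OF assms(1,2,3) prod.collapse[symmetric]] by blast
  then have "mmult d n (mmult d n (word_op d n gs) (pauli d n k a b)) V = scal c (pauli d n k a' b')"
    using pauli_cong[OF assms(5)] by (simp add: mmult_scal_left mmult_assoc assms(4))
  then show ?thesis
    using pauli_change_phase[of d n k a' b' k'] by (auto simp: scal_scal)
qed

section \<open>A circuit for the first pair\<close>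

lemma conj_act_CX_funpow:
  "k \<noteq> 0 \<Longrightarrow> (conj_act (CX_at 0 k) ^^ m) (a, b) =
    (a(0 := a 0 - int m * a k), b(k := b k + int m * b 0))"
  by (induction m) (auto simp: fun_eq_iff algebra_simps)

lemma conj_act_S_funpow:
  "(conj_act (S_at 0) ^^ m) (a, b) = (a(0 := a 0 + int m * b 0), b)"
  by (induction m) (auto simp: fun_eq_iff algebra_simps)

definition transfer_block :: "nat \<Rightarrow> nat \<Rightarrow> nat \<Rightarrow> gate_label list" where
  "transfer_block k p q =
     replicate q (CX_at 0 k) @ [F_at k] @ replicate p (CX_at 0 k) @ [F_at k, F_at k, F_at k]"

lemma foldr_conj_act_transfer_block:
  "k \<noteq> 0 \<Longrightarrow> foldr conj_act (transfer_block k p q) (a, b) =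
    (a(0 := a 0 + int p * b k - int q * (a k + int p * b 0), k := a k + int p * b 0),
     b(k := b k + int q * b 0))"
  by (simp add: transfer_block_def conj_act_CX_funpow fun_eq_iff algebra_simps)

fun transfer_word :: "(nat \<Rightarrow> nat) \<Rightarrow> (nat \<Rightarrow> nat) \<Rightarrow> nat \<Rightarrow> gate_label list" where
  "transfer_word p q 0 = []"
| "transfer_word p q (Suc m) = (if m = 0 then [] else transfer_block m (p m) (q m)) @ transfer_word p q m"

lemma foldr_conj_act_transfer_word:
  "foldr conj_act (transfer_word p q m) (a, b) =
    (\<lambda>l. if l = 0 then a 0 + (\<Sum>j\<in>{1..<m}. int (p j) * b j - int (q j) * (a j + int (p j) * b 0))
         else if l < m then a l + int (p l) * b 0 else a l,
     \<lambda>l. if 0 < l \<and> l < m then b l + int (q l) * b 0 else b l)"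
proof (induction m)
  case (Suc m)
  show ?case
  proof (cases "m = 0")
    case True
    then show ?thesis by (simp add: fun_eq_iff)
  next
    case False
    have "foldr conj_act (transfer_word p q (Suc m)) (a, b) =
        foldr conj_act (transfer_block m (p m) (q m)) (foldr conj_act (transfer_word p q m) (a, b))"
      using False by simp
    then show ?thesis using False
      by (simp only: Suc.IH foldr_conj_act_transfer_block[OF False])
        (auto simp: fun_eq_iff sum.atLeastLessThan_Suc algebra_simps)
  qed
qed (auto simp: fun_eq_iff)

lemma transfer_word_valid: "m \<le> n \<Longrightarrow> g \<in> set (transfer_word p q m) \<Longrightarrow> label_valid n g"
  by (induction m) (auto simp: transfer_block_def split: if_splits)

definition split_exps :: "nat \<Rightarrow> int \<Rightarrow> (nat \<Rightarrow> int) \<Rightarrow> int \<Rightarrow> (nat \<Rightarrow> int) \<Rightarrow> (nat \<Rightarrow> int) \<times> (nat \<Rightarrow> int)" where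
  "split_exps n a0 \<alpha> b0 \<beta> =
     (\<lambda>l. if l = 0 then a0 else if l < n then \<alpha> l else 0, \<lambda>l. if l = 0 then b0 else if l < n then \<beta> l else 0)"

lemma foldr_conj_act_transfer_word_split:
  "foldr conj_act (transfer_word p q n) (split_exps n a0 \<alpha> b0 \<beta>) =
    split_exps n (a0 + (\<Sum>j\<in>{1..<n}. int (p j) * \<beta> j - int (q j) * (\<alpha> j + int (p j) * b0)))
      (\<lambda>l. \<alpha> l + int (p l) * b0) b0 (\<lambda>l. \<beta> l + int (q l) * b0)"
proof -
  have "(\<Sum>j\<in>{1..<n}. int (p j) * (if j = 0 then b0 else if j < n then \<beta> j else 0) -
          int (q j) * ((if j = 0 then a0 else if j < n then \<alpha> j else 0) + int (p j) * b0)) =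
      (\<Sum>j\<in>{1..<n}. int (p j) * \<beta> j - int (q j) * (\<alpha> j + int (p j) * b0))"
    by (intro sum.cong) auto
  then show ?thesis
    unfolding split_exps_def foldr_conj_act_transfer_word by (auto simp: fun_eq_iff)
qed

lemma conj_act_S_funpow_split:
  "(conj_act (S_at 0) ^^ m) (split_exps n a0 \<alpha> b0 \<beta>) = split_exps n (a0 + int m * b0) \<alpha> b0 \<beta>"
  unfolding split_exps_def conj_act_S_funpow by (auto simp: fun_eq_iff)

lemma conj_act_F_split:
  "conj_act (F_at 0) (split_exps n a0 \<alpha> b0 \<beta>) = split_exps n b0 \<alpha> (- a0) \<beta>"
  by (auto simp: split_exps_def fun_eq_iff)

definition first_pair_word :: "(nat \<Rightarrow> nat) \<Rightarrow> (nat \<Rightarrow> nat) \<Rightarrow> (nat \<Rightarrow> nat) \<Rightarrow> (nat \<Rightarrow> nat) \<Rightarrow> nat \<Rightarrow> gate_label list" where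
  "first_pair_word p q p' q' n =
     [F_at 0] @ replicate (\<Sum>j\<in>{1..<n}. p' j * q' j) (S_at 0) @ transfer_word p' q' n @
     [F_at 0, F_at 0, F_at 0] @ replicate (\<Sum>j\<in>{1..<n}. p j * q j) (S_at 0) @ transfer_word p q n"

lemma first_pair_word_valid: "n > 0 \<Longrightarrow> g \<in> set (first_pair_word p q p' q' n) \<Longrightarrow> label_valid n g"
  by (auto simp: first_pair_word_def dest: transfer_word_valid[OF order_refl])

lemma foldr_conj_act_first_pair_word:
  "foldr conj_act (first_pair_word p q p' q' n) v =
    conj_act (F_at 0) ((conj_act (S_at 0) ^^ (\<Sum>j\<in>{1..<n}. p' j * q' j))
     (foldr conj_act (transfer_word p' q' n) (conj_act (F_at 0) (conj_act (F_at 0) (conj_act (F_at 0)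
      ((conj_act (S_at 0) ^^ (\<Sum>j\<in>{1..<n}. p j * q j)) (foldr conj_act (transfer_word p q n) v)))))))"
  by (simp only: first_pair_word_def foldr_append foldr.simps foldr_replicate o_apply id_apply)

lemma foldr_conj_act_first_pair_word_X:
  "foldr conj_act (first_pair_word p q p' q' n) (split_exps n 0 (\<lambda>_. 0) 1 (\<lambda>_. 0)) =
    split_exps n 0 p (1 - (\<Sum>j\<in>{1..<n}. int (p' j) * int (q j) - int (q' j) * int (p j))) q"
  unfolding foldr_conj_act_first_pair_word foldr_conj_act_transfer_word_split
    conj_act_S_funpow_split conj_act_F_split
  by (simp add: of_nat_sum sum_negf mult.commute)

lemma foldr_conj_act_first_pair_word_Z:
  "foldr conj_act (first_pair_word p q p' q' n) (split_exps n 1 (\<lambda>_. 0) 0 (\<lambda>_. 0)) =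
    split_exps n 1 p' 0 q'"
  unfolding foldr_conj_act_first_pair_word foldr_conj_act_transfer_word_split
    conj_act_S_funpow_split conj_act_F_split
  by (simp add: of_nat_sum sum_negf mult.commute)

lemma sform_first_pair_tail:
  assumes "n > 0"
    and "sform d n a b c e = sform d n (\<lambda>_. 0) (unitv 0) (unitv 0) (\<lambda>_. 0)"
    and "[a 0 = 0] (mod int d)" "[b 0 = 1] (mod int d)" "[c 0 = 1] (mod int d)" "[e 0 = 0] (mod int d)"
  shows "[(\<Sum>j\<in>{1..<n}. a j * e j - b j * c j) = 0] (mod int d)"
proof -
  let ?T = "\<Sum>j\<in>{1..<n}. a j * e j - b j * c j"
  have "(\<Sum>i<n. 0 * 0 - unitv 0 i * unitv 0 i) = (\<Sum>i<n. if i = 0 then -1 else 0 :: int)"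
    by (intro sum.cong) (auto simp: unitv_def)
  also have "\<dots> = -1"
    using assms(1) by simp
  finally have "sform d n (\<lambda>_. 0) (unitv 0) (unitv 0) (\<lambda>_. 0) = -1 mod int d"
    by (simp add: sform_def)
  moreover have "(\<Sum>i<n. a i * e i - b i * c i) = a 0 * e 0 - b 0 * c 0 + ?T"
    using assms(1) by (simp add: lessThan_atLeast0 sum.atLeast_Suc_lessThan)
  ultimately have total: "[a 0 * e 0 - b 0 * c 0 + ?T = -1] (mod int d)"
    using assms(2) by (simp add: sform_def cong_def)
  have "[a 0 * e 0 - b 0 * c 0 = 0 * 0 - 1 * 1] (mod int d)"
    using assms(3-6) by (intro cong_diff cong_mult)
  then have "[a 0 * e 0 - b 0 * c 0 = -1] (mod int d)"
    by simp
  then have "[a 0 * e 0 - b 0 * c 0 + ?T = -1 + ?T] (mod int d)"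
    by (rule cong_add[OF _ cong_refl])
  then have "[-1 + ?T = -1] (mod int d)"
    using total by (meson cong_sym cong_trans)
  then show ?thesis by (simp only: cong_add_lcancel_0)
qed

lemma exists_word_first_pair:
  assumes "n > 0" "d > 0"
    and "[a 0 = 0] (mod int d)" "[b 0 = 1] (mod int d)" "[c 0 = 1] (mod int d)" "[e 0 = 0] (mod int d)"
    and "[(\<Sum>j\<in>{1..<n}. a j * e j - b j * c j) = 0] (mod int d)"
  shows "\<exists>gs. (\<forall>g\<in>set gs. label_valid n g) \<and>
    exps_cong d n (foldr conj_act gs (\<lambda>_. 0, unitv 0)) (a, b) \<and>
    exps_cong d n (foldr conj_act gs (unitv 0, \<lambda>_. 0)) (c, e)"
proof -
  define res where "res v = nat (v mod int d)" for v
  have res: "[int (res v) = v] (mod int d)" for v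
    using assms(2) by (simp add: res_def cong_def)
  let ?p = "\<lambda>j. res (a j)" and ?q = "\<lambda>j. res (b j)" and ?p' = "\<lambda>j. res (c j)" and ?q' = "\<lambda>j. res (e j)"
  let ?T = "\<Sum>j\<in>{1..<n}. int (?p' j) * int (?q j) - int (?q' j) * int (?p j)"
  have "[?T = (\<Sum>j\<in>{1..<n}. c j * b j - e j * a j)] (mod int d)"
    by (intro cong_sum cong_diff cong_mult res)
  also have "(\<Sum>j\<in>{1..<n}. c j * b j - e j * a j) = - (\<Sum>j\<in>{1..<n}. a j * e j - b j * c j)"
    by (simp add: sum_negf[symmetric] algebra_simps)
  also have "[\<dots> = - 0] (mod int d)"
    using assms(7) by (rule cong_uminus)
  finally have "[1 - ?T = 1] (mod int d)"
    using cong_diff[OF cong_refl, of ?T 0 "int d" 1] by simp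
  then have T: "[1 - ?T = b 0] (mod int d)"
    using cong_sym[OF assms(4)] by (rule cong_trans)
  have X: "(\<lambda>_. 0, unitv 0) = split_exps n 0 (\<lambda>_. 0) 1 (\<lambda>_. 0)"
    and Z: "(unitv 0, \<lambda>_. 0) = split_exps n 1 (\<lambda>_. 0) 0 (\<lambda>_. 0)"
    using assms(1) by (auto simp: split_exps_def unitv_def fun_eq_iff)
  show ?thesis
  proof (intro exI conjI)
    show "\<forall>g\<in>set (first_pair_word ?p ?q ?p' ?q' n). label_valid n g"
      using assms(1) first_pair_word_valid by blast
    show "exps_cong d n (foldr conj_act (first_pair_word ?p ?q ?p' ?q' n) (\<lambda>_. 0, unitv 0)) (a, b)"
      unfolding X foldr_conj_act_first_pair_word_X
      using assms(3) T res by (auto simp: exps_cong_def split_exps_def cong_sym_eq)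
    show "exps_cong d n (foldr conj_act (first_pair_word ?p ?q ?p' ?q' n) (unitv 0, \<lambda>_. 0)) (c, e)"
      unfolding Z foldr_conj_act_first_pair_word_Z
      using assms(5,6) res by (auto simp: exps_cong_def split_exps_def cong_sym_eq)
  qed
qed

theorem lemma10:
  fixes d n :: nat
    and kX kZ :: "nat \<Rightarrow> int"
    and aX bX aZ bZ :: "nat \<Rightarrow> nat \<Rightarrow> int"
  assumes "prime d" and "odd d" and "n \<ge> 2"
    and "\<forall>i<n. \<forall>j<n.
           sform d n (aX i) (bX i) (aX j) (bX j) = sform d n (\<lambda>_. 0) (unitv i) (\<lambda>_. 0) (unitv j) \<and>
           sform d n (aX i) (bX i) (aZ j) (bZ j) = sform d n (\<lambda>_. 0) (unitv i) (unitv j) (\<lambda>_. 0) \<and>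
           sform d n (aZ i) (bZ i) (aX j) (bX j) = sform d n (unitv i) (\<lambda>_. 0) (\<lambda>_. 0) (unitv j) \<and>
           sform d n (aZ i) (bZ i) (aZ j) (bZ j) = sform d n (unitv i) (\<lambda>_. 0) (unitv j) (\<lambda>_. 0)"
    and "aX 0 0 mod int d = 0" and "bX 0 0 mod int d = 1"
    and "aZ 0 0 mod int d = 1" and "bZ 0 0 mod int d = 0"
  shows "\<exists>U V (c1::complex) (c2::complex). circuit d n U \<and>
           mmult d n U V = ident d n \<and> mmult d n V U = ident d n \<and>
           mmult d n (mmult d n U (pauli d n 0 (\<lambda>_. 0) (unitv 0))) V
             = scal c1 (pauli d n (kX 0) (aX 0) (bX 0)) \<and>
           mmult d n (mmult d n U (pauli d n 0 (unitv 0) (\<lambda>_. 0))) V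
             = scal c2 (pauli d n (kZ 0) (aZ 0) (bZ 0))"
proof -
  have d: "d > 1" using assms(1) prime_gt_1_nat by blast
  have n: "n > 0" using assms(3) by simp
  have first: "[aX 0 0 = 0] (mod int d)" "[bX 0 0 = 1] (mod int d)"
    "[aZ 0 0 = 1] (mod int d)" "[bZ 0 0 = 0] (mod int d)"
    using assms(5-8) d by (simp_all add: cong_def)
  have "[(\<Sum>j\<in>{1..<n}. aX 0 j * bZ 0 j - bX 0 j * aZ 0 j) = 0] (mod int d)"
    using assms(4) n by (intro sform_first_pair_tail[of n d "aX 0" "bX 0" "aZ 0" "bZ 0"] first) auto
  then obtain gs where valid: "\<forall>g\<in>set gs. label_valid n g"
    and X: "exps_cong d n (foldr conj_act gs (\<lambda>_. 0, unitv 0)) (aX 0, bX 0)"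
    and Z: "exps_cong d n (foldr conj_act gs (unitv 0, \<lambda>_. 0)) (aZ 0, bZ 0)"
    using exists_word_first_pair[of n d "aX 0" "bX 0" "aZ 0" "bZ 0"] n d first by auto
  have "invertible_op d n (word_op d n gs)"
    using d valid by (intro invertible_word_op) auto
  then obtain V where V: "mmult d n (word_op d n gs) V = ident d n" "mmult d n V (word_op d n gs) = ident d n"
    by (auto simp: invertible_op_def)
  obtain c1 where "mmult d n (mmult d n (word_op d n gs) (pauli d n 0 (\<lambda>_. 0) (unitv 0))) V =
      scal c1 (pauli d n (kX 0) (aX 0) (bX 0))"
    using word_op_conj_pauli[OF _ assms(2) valid V(1) X] d by auto
  moreover obtain c2 where "mmult d n (mmult d n (word_op d n gs) (pauli d n 0 (unitv 0) (\<lambda>_. 0))) V =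
      scal c2 (pauli d n (kZ 0) (aZ 0) (bZ 0))"
    using word_op_conj_pauli[OF _ assms(2) valid V(1) Z] d by auto
  ultimately show ?thesis
    using circuit_word_op[OF valid] V by blast
qed

end
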